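(* Let $P$ be a Poisson conformal algebra with $\lambda$-products $(\cdot_\lambda\cdot)$ and $[\cdot_\lambda\cdot]$, and let $L\subseteq P$ be an $H$-submodule closed under $[\cdot_\lambda\cdot]$ (so $L$ is a Lie conformal algebra). Then $P$ is a conformal module over $L$ with respect to $$\langle a_\lambda u\rangle=[a_\lambda u]+\lambda(a_\lambda u),\qquad a\in L,\ u\in P.$$
   Context: $\Bbbk$ is a field of characteristic $0$, $H=\Bbbk[\partial]$. A $\lambda$-product on an $H$-module $C$ is a $\Bbbk$-bilinear map $(x,y)\mapsto(x_\lambda y)=\sum_{n\ge0}\frac{\lambda^n}{n!}(x_{(n)}y)\in C[\lambda]$ satisfying $(\partial x_\lambda y)=-\lambda(x_\lambda y)$, $(x_\lambda\partial y)=(\partial+\lambda)(x_\lambda y)$; $(x_{-\partial-\lambda}y)$ means $\sum_n\frac{(-\partial-\lambda)^n}{n!}(x_{(n)}y)$ with $\partial$ acting on coefficients. A Poisson conformal algebra is an $H$-module $P$ with two $\lambda$-products such that $(\cdot_\lambda\cdot)$ is associative, $(x_\lambda(y_\mu z))=((x_\lambda y)_{\lambda+\mu}z)$, and commutative, $(x_\lambda y)=(y_{-\partial-\lambda}x)$; $[\cdot_\lambda\cdot]$ satisfies $[x_\lambda y]=-[y_{-\partial-\lambda}x]$ and $[x_\lambda[y_\mu z]]-[y_\mu[x_\lambda z]]=[[x_\lambda y]_{\lambda+\mu}z]$; and $[x_\lambda(y_\mu z)]=([x_\lambda y]_{\lambda+\mu}z)+(y_\mu[x_\lambda z])$ for all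 $x,y,z$. A conformal module over a Lie conformal algebra $L$ is an $H$-module $M$ with a $\Bbbk$-bilinear map $L\times M\to M[\lambda]$, $(a,u)\mapsto\langle a_\lambda u\rangle$, such that $\langle\partial a_\lambda u\rangle=-\lambda\langle a_\lambda u\rangle$, $\langle a_\lambda\partial u\rangle=(\partial+\lambda)\langle a_\lambda u\rangle$, and $\langle a_\lambda\langle b_\mu u\rangle\rangle-\langle b_\mu\langle a_\lambda u\rangle\rangle=\langle[a_\lambda b]_{\lambda+\mu}u\rangle$ for all $a,b\in L$, $u\in M$. *)

theory Defs
  imports Complex_Main
begin

text \<open>An H-module
(H = k[d]) is a k-vector space 'p (scalar multiplication sc) together with a k-linear map D
(the action of d).  An element of P[lambda] is represented by its coefficient sequence
nat => 'p (coefficient of lambda^n), finitely supported; an element of P[lambda,mu] by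
nat => nat => 'p (coefficient of lambda^p mu^q).  A lambda-product is represented by
m :: 'p => 'p => nat => 'p, where m x y n is the coefficient of lambda^n in (x_lambda y),
i.e. m x y n = x_(n) y / n!.\<close>

definition fin_supp :: "(nat \<Rightarrow> 'p::zero) \<Rightarrow> bool" where
  "fin_supp f \<longleftrightarrow> finite {n. f n \<noteq> 0}"

text \<open>Multiplication of an element of P[lambda] by lambda.\<close>
definition lshift :: "(nat \<Rightarrow> 'p::zero) \<Rightarrow> nat \<Rightarrow> 'p" where
  "lshift f n = (if n = 0 then 0 else f (n - 1))"

text \<open>Given f = sum_n lambda^n f_n, the element sum_n (-D-lambda)^n f_n of P[lambda]
(D acting on the coefficients); its coefficient of lambda^k is
sum_n (-1)^k (n choose k) (-D)^(n-k) f_n.\<close>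
definition subst_neg ::
  "('k::field \<Rightarrow> 'p::ab_group_add \<Rightarrow> 'p) \<Rightarrow> ('p \<Rightarrow> 'p) \<Rightarrow> (nat \<Rightarrow> 'p) \<Rightarrow> nat \<Rightarrow> 'p" where
  "subst_neg sc D f k =
     (\<Sum>n\<in>{n. f n \<noteq> 0}. sc ((-1) ^ k * of_nat (n choose k)) (((\<lambda>v. - D v) ^^ (n - k)) (f n)))"

text \<open>Coefficient of lambda^p mu^q in ((x_lambda y)_{lambda+mu} z), where the inner product
is mi and the outer one is mo:  sum_{j<=p} (j+q choose j) mo (mi x y (p-j)) z (j+q).\<close>
definition comp_sum ::
  "('k::field \<Rightarrow> 'p::ab_group_add \<Rightarrow> 'p) \<Rightarrow> ('p \<Rightarrow> 'p \<Rightarrow> nat \<Rightarrow> 'p) \<Rightarrow> ('p \<Rightarrow> 'p \<Rightarrow> nat \<Rightarrow> 'p)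
     \<Rightarrow> 'p \<Rightarrow> 'p \<Rightarrow> 'p \<Rightarrow> nat \<Rightarrow> nat \<Rightarrow> 'p" where
  "comp_sum sc mo mi x y z p q =
     (\<Sum>j\<le>p. sc (of_nat ((j + q) choose j)) (mo (mi x y (p - j)) z (j + q)))"

definition bilinear_on ::
  "('k::field \<Rightarrow> 'p::ab_group_add \<Rightarrow> 'p) \<Rightarrow> 'p set \<Rightarrow> 'p set \<Rightarrow> ('p \<Rightarrow> 'p \<Rightarrow> nat \<Rightarrow> 'p) \<Rightarrow> bool" where
  "bilinear_on sc A B m \<longleftrightarrow>
     (\<forall>x\<in>A. \<forall>x'\<in>A. \<forall>y\<in>B. \<forall>n. m (x + x') y n = m x y n + m x' y n) \<and>
     (\<forall>c. \<forall>x\<in>A. \<forall>y\<in>B. \<forall>n. m (sc c x) y n = sc c (m x y n)) \<and>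
     (\<forall>x\<in>A. \<forall>y\<in>B. \<forall>y'\<in>B. \<forall>n. m x (y + y') n = m x y n + m x y' n) \<and>
     (\<forall>c. \<forall>x\<in>A. \<forall>y\<in>B. \<forall>n. m x (sc c y) n = sc c (m x y n))"

definition lambda_product ::
  "('k::field \<Rightarrow> 'p::ab_group_add \<Rightarrow> 'p) \<Rightarrow> ('p \<Rightarrow> 'p) \<Rightarrow> ('p \<Rightarrow> 'p \<Rightarrow> nat \<Rightarrow> 'p) \<Rightarrow> bool" where
  "lambda_product sc D m \<longleftrightarrow>
     (\<forall>x y. fin_supp (m x y)) \<and> bilinear_on sc UNIV UNIV m \<and>
     (\<forall>x y n. m (D x) y n = - lshift (m x y) n) \<and>
     (\<forall>x y n. m x (D y) n = D (m x y n) + lshift (m x y) n)"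

definition H_module :: "('k::field \<Rightarrow> 'p::ab_group_add \<Rightarrow> 'p) \<Rightarrow> ('p \<Rightarrow> 'p) \<Rightarrow> bool" where
  "H_module sc D \<longleftrightarrow> vector_space sc \<and> Vector_Spaces.linear sc sc D"

definition poisson_conformal_algebra ::
  "('k::field \<Rightarrow> 'p::ab_group_add \<Rightarrow> 'p) \<Rightarrow> ('p \<Rightarrow> 'p)
     \<Rightarrow> ('p \<Rightarrow> 'p \<Rightarrow> nat \<Rightarrow> 'p) \<Rightarrow> ('p \<Rightarrow> 'p \<Rightarrow> nat \<Rightarrow> 'p) \<Rightarrow> bool" where
  "poisson_conformal_algebra sc D m br \<longleftrightarrow>
     H_module sc D \<and> lambda_product sc D m \<and> lambda_product sc D br \<and>
     \<comment> \<open>associativity: (x_lambda (y_mu z)) = ((x_lambda y)_{lambda+mu} z)\<close>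
     (\<forall>x y z p q. m x (m y z q) p = comp_sum sc m m x y z p q) \<and>
     \<comment> \<open>commutativity: (x_lambda y) = (y_{-d-lambda} x)\<close>
     (\<forall>x y. m x y = subst_neg sc D (m y x)) \<and>
     \<comment> \<open>skew-symmetry\<close>
     (\<forall>x y k. br x y k = - subst_neg sc D (br y x) k) \<and>
     \<comment> \<open>Jacobi identity\<close>
     (\<forall>x y z p q. br x (br y z q) p - br y (br x z p) q = comp_sum sc br br x y z p q) \<and>
     \<comment> \<open>Leibniz rule\<close>
     (\<forall>x y z p q. br x (m y z q) p = comp_sum sc m br x y z p q + m y (br x z p) q)"

definition H_submodule :: "('k::field \<Rightarrow> 'p::ab_group_add \<Rightarrow> 'p) \<Rightarrow> ('p \<Rightarrow> 'p) \<Rightarrow> 'p set \<Rightarrow> bool" where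
  "H_submodule sc D L \<longleftrightarrow> module.subspace sc L \<and> (\<forall>a\<in>L. D a \<in> L)"

text \<open>Conformal module (H-module (sc, D) = M) over the Lie conformal algebra (L, br),
with action act: act a u n is the coefficient of lambda^n in <a_lambda u>.\<close>
definition conformal_module ::
  "('k::field \<Rightarrow> 'p::ab_group_add \<Rightarrow> 'p) \<Rightarrow> ('p \<Rightarrow> 'p) \<Rightarrow> 'p set \<Rightarrow> ('p \<Rightarrow> 'p \<Rightarrow> nat \<Rightarrow> 'p)
     \<Rightarrow> ('p \<Rightarrow> 'p \<Rightarrow> nat \<Rightarrow> 'p) \<Rightarrow> bool" where
  "conformal_module sc D L br act \<longleftrightarrow>
     H_module sc D \<and>
     (\<forall>a\<in>L. \<forall>u. fin_supp (act a u)) \<and> bilinear_on sc L UNIV act \<and>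
     (\<forall>a\<in>L. \<forall>u n. act (D a) u n = - lshift (act a u) n) \<and>
     (\<forall>a\<in>L. \<forall>u n. act a (D u) n = D (act a u n) + lshift (act a u) n) \<and>
     (\<forall>a\<in>L. \<forall>b\<in>L. \<forall>u p q. act a (act b u q) p - act b (act a u p) q = comp_sum sc act br a b u p q)"

end

(* For a, b in P and u in P write <a_lambda u> = [a_lambda u] + lambda (a_lambda u) and expand
   <a_lambda <b_mu u>> - <b_mu <a_lambda u>> into four groups.  The Jacobi identity handles the
   brackets; the Leibniz rule rewrites the two mixed terms, whose leftovers cancel by skew-symmetry;
   the products (a_lambda (b_mu u)) and (b_mu (a_lambda u)) coincide by associativity and
   commutativity.  Both of the last two facts rest on one substitution lemma: in
   ((g_{-d-mu})_{lambda+mu} z) the operator d acts as -lambda-mu, so -d-mu becomes lambda and the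
   substitution merely exchanges lambda and mu.  What survives is
   [[a_lambda b]_{lambda+mu} u] + (lambda+mu) ([a_lambda b]_{lambda+mu} u). *)

theory Submission
  imports Defs
begin

definition alt_binomial_conv :: "nat \<Rightarrow> nat \<Rightarrow> nat \<Rightarrow> 'k::comm_ring_1" where
  "alt_binomial_conv n p q =
     (\<Sum>i\<le>q. of_nat ((q - i + p) choose (q - i)) * (-1) ^ i * of_nat (n choose i))"

lemma alt_binomial_conv_Suc_Suc:
  "alt_binomial_conv (Suc n) p (Suc q) = alt_binomial_conv n p (Suc q) - alt_binomial_conv n p q"
  unfolding alt_binomial_conv_def
  by (subst (1 2) sum.atMost_Suc_shift) (simp add: algebra_simps sum.distrib sum_subtractf sum_negf)

lemma alt_binomial_conv_0_right: "alt_binomial_conv n p 0 = 1"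
  by (simp add: alt_binomial_conv_def)

lemma alt_binomial_conv_0_left: "alt_binomial_conv 0 p q = of_nat ((p + q) choose q)"
  unfolding alt_binomial_conv_def by (subst sum.atMost_shift) (simp add: add.commute)

text \<open>Both sides are the coefficient of \<open>x^q\<close> in \<open>(1 - x)^n (1 - x)^-(p+1) = (1 - x)^(n-p-1)\<close>.\<close>
lemma alt_binomial_conv_eq:
  "n \<le> p + q \<Longrightarrow>
    alt_binomial_conv n p q = (if n \<le> p then of_nat ((p + q - n) choose q) else (0::'k::comm_ring_1))"
proof (induction n arbitrary: q)
  case 0
  then show ?case by (simp add: alt_binomial_conv_0_left)
next
  case (Suc n)
  show ?case
  proof (cases q)
    case 0
    then show ?thesis using Suc.prems by (simp add: alt_binomial_conv_0_right)
  next
    case (Suc q')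
    have "alt_binomial_conv n p (Suc q') = (if n \<le> p then of_nat ((p + Suc q' - n) choose Suc q') else (0::'k))"
      using Suc.prems Suc by (intro Suc.IH) simp
    moreover have "alt_binomial_conv n p q' = (if n \<le> p then of_nat ((p + q' - n) choose q') else (0::'k))"
      using Suc.prems Suc by (intro Suc.IH) simp
    ultimately have rec: "alt_binomial_conv (Suc n) p q =
        (if n \<le> p then of_nat ((p + Suc q' - n) choose Suc q') - of_nat ((p + q' - n) choose q') else (0::'k))"
      using Suc by (simp add: alt_binomial_conv_Suc_Suc)
    show ?thesis
    proof (cases "Suc n \<le> p")
      case True
      then obtain t where "p + q' - n = Suc t" "p + q - Suc n = Suc t"
        using Suc by (intro that[of "p + q' - Suc n"]) auto
      moreover have "p + Suc q' - n = Suc (Suc t)"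
        using True \<open>p + q' - n = Suc t\<close> by simp
      ultimately show ?thesis
        using True rec Suc by simp
    next
      case False
      then show ?thesis
        using rec Suc by (cases "n = p") auto
    qed
  qed
qed

lemma alt_binomial_conv_reindexed:
  fixes n p q :: nat
  assumes "n \<le> p + q"
  shows "(\<Sum>j\<le>q. of_nat ((j + p) choose j) * ((-1) ^ (q - j) * of_nat (n choose (q - j))))
       = (if n \<le> p then of_nat ((p + q - n) choose q) else (0::'k::comm_ring_1))"
proof -
  have "(\<Sum>j\<le>q. of_nat ((j + p) choose j) * ((-1) ^ (q - j) * of_nat (n choose (q - j))))
      = (alt_binomial_conv n p q :: 'k)"
    unfolding alt_binomial_conv_def atLeast0AtMost[symmetric]
    by (subst sum.atLeastAtMost_rev) (auto intro!: sum.cong simp: algebra_simps)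
  then show ?thesis
    using alt_binomial_conv_eq[OF assms] by simp
qed

lemma lshift_nonzero_iff: "lshift f n \<noteq> 0 \<longleftrightarrow> (\<exists>k. n = Suc k \<and> f k \<noteq> 0)"
  by (cases n) (auto simp: lshift_def)

lemma fin_supp_lshift: "fin_supp f \<Longrightarrow> fin_supp (lshift f)"
proof -
  have "{n. lshift f n \<noteq> 0} = Suc ` {n. f n \<noteq> 0}"
    by (auto simp: lshift_nonzero_iff)
  then show "fin_supp f \<Longrightarrow> fin_supp (lshift f)"
    by (simp add: fin_supp_def)
qed

lemma fin_supp_add:
  fixes f g :: "nat \<Rightarrow> 'p::monoid_add"
  assumes "fin_supp f" "fin_supp g"
  shows "fin_supp (\<lambda>n. f n + g n)"
proof -
  have "{n. f n + g n \<noteq> 0} \<subseteq> {n. f n \<noteq> 0} \<union> {n. g n \<noteq> 0}"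
    by auto
  then show ?thesis
    using assms unfolding fin_supp_def by (meson finite_Un finite_subset)
qed

context vector_space
begin

text \<open>Shifting the outer product multiplies by \<open>\<lambda> + \<mu>\<close>, which splits into the two shifted sums.\<close>
lemma comp_sum_lshift:
  "comp_sum scale (\<lambda>x z. lshift (mo x z)) mi x y z p q
   = (if q = 0 then 0 else comp_sum scale mo mi x y z p (q - 1))
   + (if p = 0 then 0 else comp_sum scale mo mi x y z (p - 1) q)"
proof (cases p)
  case 0
  then show ?thesis by (cases q) (auto simp: comp_sum_def lshift_def)
next
  case (Suc p')
  show ?thesis
  proof (cases q)
    case 0
    show ?thesis unfolding Suc 0 comp_sum_def
      by (subst sum.atMost_Suc_shift) (simp add: lshift_def)
  next
    case (Suc q')
    have "comp_sum scale (\<lambda>x z. lshift (mo x z)) mi x y z p q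
       = scale 1 (mo (mi x y (Suc p')) z q')
       + (\<Sum>j\<le>p'. scale (of_nat ((Suc j + q') choose Suc j)) (mo (mi x y (p' - j)) z (Suc j + q'))
                 + scale (of_nat ((j + q) choose j)) (mo (mi x y (p' - j)) z (j + q)))"
      unfolding Suc \<open>p = Suc p'\<close> comp_sum_def
      by (subst sum.atMost_Suc_shift) (simp add: lshift_def scale_left_distrib algebra_simps)
    also have "\<dots> = comp_sum scale mo mi x y z p (q - 1) + comp_sum scale mo mi x y z (p - 1) q"
      unfolding Suc \<open>p = Suc p'\<close> comp_sum_def
      by (subst sum.atMost_Suc_shift) (simp add: sum.distrib)
    finally show ?thesis
      using Suc \<open>p = Suc p'\<close> by simp
  qed
qed

lemma comp_sum_add_outer:
  "comp_sum scale (\<lambda>x z n. mo x z n + mo' x z n) mi x y z p q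
   = comp_sum scale mo mi x y z p q + comp_sum scale mo' mi x y z p q"
  by (simp add: comp_sum_def scale_right_distrib sum.distrib)

end

locale left_sesquilinear = vector_space sc
  for sc :: "'k::field \<Rightarrow> 'p::ab_group_add \<Rightarrow> 'p" +
  fixes D :: "'p \<Rightarrow> 'p" and mo :: "'p \<Rightarrow> 'p \<Rightarrow> nat \<Rightarrow> 'p"
  assumes D_add: "D (x + y) = D x + D y"
    and left_add: "mo (x + x') z n = mo x z n + mo x' z n"
    and left_scale: "mo (sc c x) z n = sc c (mo x z n)"
    and left_D: "mo (D x) z n = - lshift (mo x z) n"
begin

lemma left_zero: "mo 0 z n = 0"
  using left_add[of 0 0 z n] by simp

lemma left_uminus: "mo (- x) z n = - mo x z n"
  using left_add[of x "- x" z n] by (simp add: left_zero eq_neg_iff_add_eq_0 add.commute)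

lemma left_sum: "mo (\<Sum>i\<in>A. f i) z n = (\<Sum>i\<in>A. mo (f i) z n)"
  by (induction A rule: infinite_finite_induct) (auto simp: left_zero left_add)

lemma left_neg_D_pow:
  "mo (((\<lambda>v. - D v) ^^ r) x) z n = (if r \<le> n then mo x z (n - r) else 0)"
proof (induction r arbitrary: n)
  case (Suc r)
  have "mo (((\<lambda>v. - D v) ^^ Suc r) x) z n = lshift (mo (((\<lambda>v. - D v) ^^ r) x) z) n"
    by (simp add: left_uminus left_D)
  then show ?case
    using Suc.IH by (auto simp: lshift_def)
qed simp

lemma left_subst_neg:
  "mo (subst_neg sc D g k) z n
   = (\<Sum>i\<in>{i. g i \<noteq> 0}. sc ((-1) ^ k * of_nat (i choose k))
        (if i \<le> n + k then mo (g i) z (n + k - i) else 0))"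
  unfolding subst_neg_def left_sum left_scale left_neg_D_pow
proof (intro sum.cong refl)
  fix i
  show "sc ((-1) ^ k * of_nat (i choose k)) (if i - k \<le> n then mo (g i) z (n - (i - k)) else 0)
      = sc ((-1) ^ k * of_nat (i choose k)) (if i \<le> n + k then mo (g i) z (n + k - i) else 0)"
    by (cases "k \<le> i") (auto simp: binomial_eq_0)
qed

text \<open>In \<open>(g\<^bsub>-\<partial>-\<mu>\<^esub>)\<^bsub>\<lambda>+\<mu>\<^esub> z\<close> the \<open>\<partial>\<close> acts as \<open>-\<lambda>-\<mu>\<close>, so \<open>-\<partial>-\<mu>\<close> becomes \<open>\<lambda>\<close>:
  the substitution only exchanges the roles of \<open>\<lambda>\<close> and \<open>\<mu>\<close>.\<close>
lemma comp_sum_subst_neg: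
  assumes "fin_supp g"
  shows "(\<Sum>j\<le>q. sc (of_nat ((j + p) choose j)) (mo (subst_neg sc D g (q - j)) z (j + p)))
       = (\<Sum>j\<le>p. sc (of_nat ((j + q) choose j)) (mo (g (p - j)) z (j + q)))"
proof -
  define S where "S = {i. g i \<noteq> 0}"
  define T where "T i = (if i \<le> p + q then mo (g i) z (p + q - i) else 0)" for i
  define G where "G i = (if i \<le> p then of_nat ((p + q - i) choose q) else (0::'k))" for i
  have "finite S"
    using assms by (simp add: S_def fin_supp_def)
  have "(\<Sum>j\<le>q. sc (of_nat ((j + p) choose j)) (mo (subst_neg sc D g (q - j)) z (j + p)))
      = (\<Sum>j\<le>q. \<Sum>i\<in>S. sc (of_nat ((j + p) choose j) * ((-1) ^ (q - j) * of_nat (i choose (q - j)))) (T i))"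
    unfolding left_subst_neg S_def T_def
    by (auto simp: scale_sum_right intro!: sum.cong)
  also have "\<dots> = (\<Sum>i\<in>S. sc (\<Sum>j\<le>q. of_nat ((j + p) choose j) * ((-1) ^ (q - j) * of_nat (i choose (q - j)))) (T i))"
    by (subst sum.swap) (simp add: scale_sum_left)
  also have "\<dots> = (\<Sum>i\<in>S. sc (G i) (T i))"
    by (intro sum.cong refl) (simp add: T_def G_def alt_binomial_conv_reindexed)
  also have "\<dots> = (\<Sum>i\<le>p. sc (G i) (T i))"
  proof -
    have "(\<Sum>i\<in>S. sc (G i) (T i)) = (\<Sum>i\<in>S \<union> {..p}. sc (G i) (T i))"
      using \<open>finite S\<close> by (intro sum.mono_neutral_left) (auto simp: S_def T_def left_zero)
    also have "\<dots> = (\<Sum>i\<le>p. sc (G i) (T i))"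
      using \<open>finite S\<close> by (intro sum.mono_neutral_right) (auto simp: G_def)
    finally show ?thesis .
  qed
  also have "\<dots> = (\<Sum>j\<le>p. sc (of_nat ((j + q) choose j)) (mo (g (p - j)) z (j + q)))"
    unfolding atLeast0AtMost[symmetric]
    by (subst (2) sum.atLeastAtMost_rev)
      (auto intro!: sum.cong simp: G_def T_def binomial_symmetric[of q])
  finally show ?thesis .
qed

end

lemma lambda_productD:
  assumes "lambda_product sc D m"
  shows "fin_supp (m x y)"
    and "m (x + x') y n = m x y n + m x' y n"
    and "m (sc c x) y n = sc c (m x y n)"
    and "m x (y + y') n = m x y n + m x y' n"
    and "m x (sc c y) n = sc c (m x y n)"
    and "m (D x) y n = - lshift (m x y) n"
    and "m x (D y) n = D (m x y n) + lshift (m x y) n"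
  using assms unfolding lambda_product_def bilinear_on_def by auto

definition twisted_action :: "('p \<Rightarrow> 'p \<Rightarrow> nat \<Rightarrow> 'p) \<Rightarrow> ('p \<Rightarrow> 'p \<Rightarrow> nat \<Rightarrow> 'p::ab_group_add) \<Rightarrow> 'p \<Rightarrow> 'p \<Rightarrow> nat \<Rightarrow> 'p"
  where "twisted_action br m a u n = br a u n + lshift (m a u) n"

lemma conformal_module_subset:
  assumes "conformal_module sc D L' br act" "L \<subseteq> L'"
  shows "conformal_module sc D L br act"
  using assms unfolding conformal_module_def bilinear_on_def by (meson subsetD)

locale poisson_conformal =
  fixes sc :: "'k::field \<Rightarrow> 'p::ab_group_add \<Rightarrow> 'p" and D :: "'p \<Rightarrow> 'p"
    and m br :: "'p \<Rightarrow> 'p \<Rightarrow> nat \<Rightarrow> 'p"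
  assumes pca: "poisson_conformal_algebra sc D m br"
begin

lemma H_module: "H_module sc D"
  and m_lambda_product: "lambda_product sc D m"
  and br_lambda_product: "lambda_product sc D br"
  and assoc: "m x (m y z q) p = comp_sum sc m m x y z p q"
  and comm: "m x y = subst_neg sc D (m y x)"
  and skew: "br x y k = - subst_neg sc D (br y x) k"
  and jacobi: "br x (br y z q) p - br y (br x z p) q = comp_sum sc br br x y z p q"
  and leibniz: "br x (m y z q) p = comp_sum sc m br x y z p q + m y (br x z p) q"
  using pca unfolding poisson_conformal_algebra_def by blast+

sublocale vector_space sc
  using H_module by (simp add: H_module_def)

sublocale D: Vector_Spaces.linear sc sc D
  using H_module by (simp add: H_module_def)

sublocale m: left_sesquilinear sc D m
  by unfold_locales (simp_all add: D.add lambda_productD[OF m_lambda_product])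

sublocale br: left_sesquilinear sc D br
  by unfold_locales (simp_all add: D.add lambda_productD[OF br_lambda_product])

lemmas m_fin_supp = lambda_productD(1)[OF m_lambda_product]
  and m_right_add = lambda_productD(4)[OF m_lambda_product]
  and m_right_scale = lambda_productD(5)[OF m_lambda_product]
  and m_right_D = lambda_productD(7)[OF m_lambda_product]
  and br_fin_supp = lambda_productD(1)[OF br_lambda_product]
  and br_right_add = lambda_productD(4)[OF br_lambda_product]
  and br_right_scale = lambda_productD(5)[OF br_lambda_product]
  and br_right_D = lambda_productD(7)[OF br_lambda_product]

lemma m_right_zero: "m x 0 n = 0"
  using m_right_add[of x 0 0] by simp

lemma br_right_zero: "br x 0 n = 0"
  using br_right_add[of x 0 0] by simp

lemma mult_left_commute: "m a (m b u q) p = m b (m a u p) q"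
proof -
  have "m b (m a u p) q
      = (\<Sum>j\<le>q. sc (of_nat ((j + p) choose j)) (m (subst_neg sc D (m a b) (q - j)) u (j + p)))"
    unfolding assoc comp_sum_def by (simp add: comm[of b a])
  also have "\<dots> = m a (m b u q) p"
    unfolding assoc comp_sum_def
    by (rule m.comp_sum_subst_neg[OF m_fin_supp])
  finally show ?thesis by simp
qed

lemma comp_sum_bracket_swap: "comp_sum sc m br b a u q p = - comp_sum sc m br a b u p q"
proof -
  have "comp_sum sc m br b a u q p
      = - (\<Sum>j\<le>q. sc (of_nat ((j + p) choose j)) (m (subst_neg sc D (br a b) (q - j)) u (j + p)))"
    unfolding comp_sum_def by (simp add: skew[of b a] m.left_uminus sum_negf)
  also have "\<dots> = - comp_sum sc m br a b u p q"
    unfolding comp_sum_def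
    by (subst m.comp_sum_subst_neg[OF br_fin_supp]) (rule refl)
  finally show ?thesis .
qed

lemma twisted_action_twisted_action:
  "twisted_action br m x (twisted_action br m y u q) p
   = br x (br y u q) p
   + (if q = 0 then 0 else br x (m y u (q - 1)) p)
   + (if p = 0 then 0 else m x (br y u q) (p - 1))
   + (if p = 0 \<or> q = 0 then 0 else m x (m y u (q - 1)) (p - 1))"
  by (simp add: twisted_action_def lshift_def br_right_add m_right_add br_right_zero m_right_zero add.assoc)

lemma comp_sum_twisted_action:
  "comp_sum sc (twisted_action br m) br a b u p q
   = comp_sum sc br br a b u p q
   + (if q = 0 then 0 else comp_sum sc m br a b u p (q - 1))
   + (if p = 0 then 0 else comp_sum sc m br a b u (p - 1) q)"
  unfolding twisted_action_def[abs_def] comp_sum_add_outer comp_sum_lshift by (simp add: add.assoc)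

lemma twisted_action_jacobi:
  "twisted_action br m a (twisted_action br m b u q) p - twisted_action br m b (twisted_action br m a u p) q
   = comp_sum sc (twisted_action br m) br a b u p q"
proof -
  have "q \<noteq> 0 \<Longrightarrow> br a (m b u (q - 1)) p = comp_sum sc m br a b u p (q - 1) + m b (br a u p) (q - 1)"
    by (rule leibniz)
  moreover have "p \<noteq> 0 \<Longrightarrow> br b (m a u (p - 1)) q = - comp_sum sc m br a b u (p - 1) q + m a (br b u q) (p - 1)"
    using leibniz[of b a u "p - 1" q] comp_sum_bracket_swap[of a b u "p - 1" q] by simp
  ultimately show ?thesis
    unfolding twisted_action_twisted_action comp_sum_twisted_action
    using jacobi[of a b u q p] mult_left_commute[of a b u "q - 1" "p - 1"]
    by (cases "p = 0"; cases "q = 0"; simp add: algebra_simps)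
qed

lemma conformal_module_twisted_action: "conformal_module sc D UNIV br (twisted_action br m)"
  unfolding conformal_module_def
proof (intro conjI ballI allI)
  show "fin_supp (twisted_action br m a u)" for a u
    unfolding twisted_action_def
    by (intro fin_supp_add fin_supp_lshift m_fin_supp br_fin_supp)
  show "bilinear_on sc UNIV UNIV (twisted_action br m)"
    by (simp add: bilinear_on_def twisted_action_def lshift_def scale_right_distrib m.left_add
        br.left_add m.left_scale br.left_scale m_right_add br_right_add m_right_scale br_right_scale)
  show "twisted_action br m (D a) u n = - lshift (twisted_action br m a u) n" for a u n
    by (simp add: twisted_action_def lshift_def m.left_D br.left_D)
  show "twisted_action br m a (D u) n = D (twisted_action br m a u n) + lshift (twisted_action br m a u) n" for a u n
    by (simp add: twisted_action_def lshift_def D.add D.zero m_right_D br_right_D)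
qed (use H_module twisted_action_jacobi in auto)

end

text \<open>The identities hold for all \<open>a \<in> P\<close>.\<close>
theorem mainTheorem5:
  fixes sc :: "'k::field_char_0 \<Rightarrow> 'p::ab_group_add \<Rightarrow> 'p"
    and D :: "'p \<Rightarrow> 'p"
    and m br :: "'p \<Rightarrow> 'p \<Rightarrow> nat \<Rightarrow> 'p"
    and L :: "'p set"
  assumes "poisson_conformal_algebra sc D m br"
    and "H_submodule sc D L"
    and "\<forall>a\<in>L. \<forall>b\<in>L. \<forall>n. br a b n \<in> L"
  shows "conformal_module sc D L br (\<lambda>a u n. br a u n + lshift (m a u) n)"
proof -
  interpret poisson_conformal sc D m br
    by unfold_locales (rule assms(1))
  have "conformal_module sc D L br (twisted_action br m)"
    using conformal_module_twisted_action by (rule conformal_module_subset) simp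
  then show ?thesis
    unfolding twisted_action_def[abs_def] .
qed

end
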